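(* Let $\Omega \subset \mathbb{R}^2$ be open, bounded with $|\Omega| = 1$, and let $\Omega = \bigcup_{i=1}^N \Omega_i$ be a partition into pairwise disjoint measurable sets of positive measure. Define $\eta_0>0$ by $\pi\eta_0^2 = \min_{1\le i\le N}|\Omega_i|$. For each $i$ let $B_i$ be a disk with center $x_i$ and radius $r_i$ such that $|B_i| = |\Omega_i|$ and $|\Omega_i\triangle B_i| = |\Omega_i|\mathcal{A}(\Omega_i)$. Let $c_1 > 0$, $0 < c_2 \le \frac{1}{20}$, $d_1 \ge 0$, and assume $\sum_{i=1}^N \frac{|\Omega_i|}{|\Omega|}\mathcal{A}(\Omega_i) \le d_1$. Let $I = \{ i : |\Omega_i| \ge (1+c_1)\pi\eta_0^2\}$ and $$J = \{ i \notin I : \exists\, j \notin I,\ j \ne i,\ |x_i - x_j| \le (1-c_2)(r_i + r_j)\}.$$ Then $$\left|\bigcup_{i \in J} B_i\right| \le \frac{20\pi}{37}\,\frac{1+c_1}{c_2^{3/2}}\, d_1.$$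
   Context: $|\cdot|$ is Lebesgue measure, $\triangle$ is symmetric difference. Fraenkel asymmetry: $\mathcal{A}(E) := \inf_B \frac{|E\triangle B|}{|E|}$ over disks $B$ with $|B| = |E|$ (the infimum is attained). *)

theory Defs
  imports "HOL-Analysis.Analysis"
begin

definition sym_diff :: "'a set \<Rightarrow> 'a set \<Rightarrow> 'a set" where
  "sym_diff E B = (E - B) \<union> (B - E)"

definition fraenkel_asymmetry :: "(real^2) set \<Rightarrow> real" where
  "fraenkel_asymmetry E =
     Inf {measure lebesgue (sym_diff E B) / measure lebesgue E | B.
            (\<exists>x r. B = ball x r) \<and> measure lebesgue B = measure lebesgue E}"

end

theory Submission
  imports Defs
begin

(* The disks B_i of the cells i in J have radius at least eta0, and every such disk
   overlaps the disk of a partner j (also not in I) a great deal: shrinking both to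
   radius eta0 keeps the centres within 2(1-c2)eta0 of each other, and the lens of two
   eta0-disks at that distance contains a rotated rectangle of area
   (99/50) c2^(3/2) eta0^2.  On the other hand the part of B_i covered by B_j lies in
   (B_i - Omega_i) together with the part of Omega_i inside B_j - Omega_j; since the
   cells are disjoint, summing over i in J costs at most twice the total deficit
   sum_k |B_k - Omega_k|, which is exactly the weighted asymmetry sum <= d1.  Hence
   card J is controlled by d1, and each B_i (i in J) has area < (1+c1) pi eta0^2. *)

section \<open>An inscribed rectangle in a symmetric lens\<close>

definition centered_box :: "real \<Rightarrow> real \<Rightarrow> (real^2) set" where
  "centered_box \<alpha> \<beta> = cbox (vector [-\<alpha>, -\<beta>]) (vector [\<alpha>, \<beta>])"

lemma mem_centered_box: "z \<in> centered_box \<alpha> \<beta> \<longleftrightarrow> \<bar>z$1\<bar> \<le> \<alpha> \<and> \<bar>z$2\<bar> \<le> \<beta>"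
  by (auto simp: centered_box_def mem_box_cart forall_2 abs_le_iff)

lemma measure_centered_box:
  assumes "0 \<le> \<alpha>" "0 \<le> \<beta>"
  shows "measure lebesgue (centered_box \<alpha> \<beta>) = (2*\<alpha>) * (2*\<beta>)"
proof -
  have "0 \<in> centered_box \<alpha> \<beta>"
    using assms by (simp add: mem_centered_box)
  then have "measure lborel (centered_box \<alpha> \<beta>) = (2*\<alpha>) * (2*\<beta>)"
    unfolding centered_box_def by (subst content_cbox_cart) (auto simp: prod_2 UNIV_2)
  then show ?thesis
    unfolding centered_box_def by (metis measure_completion sets_lborel borel_closed closed_cbox)
qed

lemma norm_sq_cart2: "norm (z::real^2) ^ 2 = (z$1)^2 + (z$2)^2"
  by (simp add: norm_eq_sqrt_inner inner_vec_def sum_2 power2_eq_square)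

text \<open>The scalar estimate behind the lens bound: a point displaced by at most
  \<open>c\<rho>/2\<close> along the axis of two centres at distance \<open>e \<le> 2(1-c)\<rho>\<close> and by at most
  \<open>0.99\<surd>c\<rho>\<close> across it lies strictly inside both disks of radius \<open>\<rho>\<close>.\<close>
lemma lens_coordinate_inequality:
  fixes c \<rho> e s t :: real
  assumes "\<rho> > 0" "c > 0" "c \<le> 1/20" "0 \<le> e" "e \<le> 2*(1-c)*\<rho>"
    and "\<bar>s\<bar> \<le> c*\<rho>/2" "\<bar>t\<bar> \<le> 99/100 * sqrt c * \<rho>"
  shows "(e/2 + s)^2 + t^2 < \<rho>^2"
proof -
  have "\<bar>e/2 + s\<bar> \<le> (1 - c/2)*\<rho>"
    using assms by (auto simp: abs_le_iff algebra_simps)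
  then have s_part: "(e/2 + s)^2 \<le> ((1 - c/2)*\<rho>)^2"
    by (metis abs_ge_zero power2_abs power_mono)
  have "t^2 \<le> (99/100 * sqrt c * \<rho>)^2"
    using assms(7) by (metis abs_ge_zero power2_abs power_mono)
  also have "\<dots> = (99/100)^2 * (sqrt c)^2 * \<rho>^2"
    by (simp only: power_mult_distrib)
  also have "\<dots> = 9801/10000 * c * \<rho>^2"
    using assms(2) by (simp add: power2_eq_square)
  finally have t_part: "t^2 \<le> 9801/10000 * c * \<rho>^2" .
  have "(1 - c/2)^2 + 9801/10000 * c < 1"
    using assms by (simp add: power2_eq_square algebra_simps)
  then have "((1 - c/2)^2 + 9801/10000 * c) * \<rho>^2 < \<rho>^2"
    using assms(1) by simp
  moreover have "((1 - c/2)*\<rho>)^2 + 9801/10000 * c * \<rho>^2 = ((1 - c/2)^2 + 9801/10000 * c) * \<rho>^2"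
    by (simp add: power_mult_distrib distrib_right)
  ultimately show ?thesis
    using s_part t_part by linarith
qed

lemma box_offset_in_ball:
  fixes z :: "real^2"
  assumes "\<rho> > 0" "c > 0" "c \<le> 1/20" "0 \<le> e" "e \<le> 2*(1-c)*\<rho>"
    and "z \<in> centered_box (c*\<rho>/2) (99/100 * sqrt c * \<rho>)"
  shows "norm ((e/2) *\<^sub>R axis 1 1 + z) < \<rho>"
proof -
  have "norm ((e/2) *\<^sub>R axis 1 1 + z) ^ 2 = (e/2 + z$1)^2 + (z$2)^2"
    by (simp add: norm_sq_cart2 axis_def)
  also have "\<dots> < \<rho>^2"
    using assms by (intro lens_coordinate_inequality) (auto simp: mem_centered_box)
  finally show ?thesis
    using assms(1) by (simp add: power_less_imp_less_base)
qed

text \<open>Two disks of radius \<open>\<rho>\<close> whose centres are at most \<open>2(1-c)\<rho>\<close> apart meet in a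
  set of area at least \<open>(99/50) c^(3/2) \<rho>^2\<close>: the lens contains the rectangle above,
  rotated onto the axis of the centres and moved to their midpoint.\<close>
lemma lens_measure_lower_bound:
  fixes p q :: "real^2"
  assumes \<rho>: "\<rho> > 0" and c: "0 < c" "c \<le> 1/20" and close: "dist p q \<le> 2*(1-c)*\<rho>"
  shows "99/50 * c powr (3/2) * \<rho>^2 \<le> measure lebesgue (ball p \<rho> \<inter> ball q \<rho>)"
proof -
  define e where "e = dist p q"
  obtain u :: "real^2" where u: "norm u = 1" "q = p + e *\<^sub>R u"
  proof (cases "p = q")
    case True
    then show ?thesis using that[of "axis 1 1"] by (simp add: e_def)
  next
    case False
    then show ?thesis
      using that[of "(1/e) *\<^sub>R (q - p)"] by (simp add: e_def dist_norm norm_minus_commute)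
  qed
  obtain f :: "real^2 \<Rightarrow> real^2" where f: "orthogonal_transformation f" "f (axis 1 1) = u"
    using orthogonal_transformation_exists_1[of "axis 1 (1::real)" u] u(1) by auto
  have lin: "linear f"
    using f(1) orthogonal_transformation_linear by blast
  have f_norm: "norm (f v) = norm v" for v
    using f(1) orthogonal_transformation_norm by blast
  have f_half: "f ((e/2) *\<^sub>R axis 1 1) = (e/2) *\<^sub>R u"
    using lin f(2) by (simp add: linear_scale)
  define K where "K = centered_box (c*\<rho>/2) (99/100 * sqrt c * \<rho>)"
  define S where "S = (+) (p + (e/2) *\<^sub>R u) ` (f ` K)"
  have e: "0 \<le> e" "e \<le> 2*(1-c)*\<rho>"
    using close by (auto simp: e_def)
  have S_lens: "S \<subseteq> ball p \<rho> \<inter> ball q \<rho>"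
  proof
    fix w assume "w \<in> S"
    then obtain z where z: "z \<in> K" "w = p + (e/2) *\<^sub>R u + f z"
      by (auto simp: S_def)
    have "-z \<in> K"
      using z(1) by (simp add: K_def mem_centered_box)
    have "w - p = f ((e/2) *\<^sub>R axis 1 1 + z)"
      using z(2) f_half by (simp add: linear_add[OF lin])
    then have "dist p w = norm ((e/2) *\<^sub>R axis 1 1 + z)"
      by (metis dist_commute dist_norm f_norm)
    then have "dist p w < \<rho>"
      using box_offset_in_ball[OF \<rho> c e] z(1) by (simp add: K_def)
    have "e *\<^sub>R u = (e/2) *\<^sub>R u + (e/2) *\<^sub>R u"
      by (simp add: scaleR_add_left[symmetric])
    then have "q - w = (e/2) *\<^sub>R u - f z"
      using z(2) u(2) by simp
    also have "\<dots> = f ((e/2) *\<^sub>R axis 1 1 + - z)"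
      using f_half by (simp add: linear_diff[OF lin])
    finally have "dist q w < \<rho>"
      using box_offset_in_ball[OF \<rho> c e, of "-z"] \<open>-z \<in> K\<close> by (simp add: K_def dist_norm f_norm)
    with \<open>dist p w < \<rho>\<close> show "w \<in> ball p \<rho> \<inter> ball q \<rho>"
      by simp
  qed
  have K: "K \<in> lmeasurable"
    by (simp add: K_def centered_box_def)
  then have "f ` K \<in> lmeasurable"
    by (rule measurable_orthogonal_image[OF f(1)])
  then have "S \<in> lmeasurable"
    unfolding S_def by (rule measurable_translation)
  with S_lens have "measure lebesgue S \<le> measure lebesgue (ball p \<rho> \<inter> ball q \<rho>)"
    by (intro measure_mono_fmeasurable) (auto intro: fmeasurable_Int_fmeasurable)
  moreover have "measure lebesgue S = measure lebesgue K"
    using measure_orthogonal_image[OF f(1) K] by (simp add: S_def measure_translation)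
  ultimately have "measure lebesgue K \<le> measure lebesgue (ball p \<rho> \<inter> ball q \<rho>)"
    by simp
  moreover have "c powr (3/2) = c * sqrt c"
  proof -
    have "c powr (3/2) = c powr (1 + 1/2)"
      by simp
    also have "\<dots> = c powr 1 * c powr (1/2)"
      by (rule powr_add)
    finally show ?thesis
      using c by (simp add: powr_half_sqrt)
  qed
  ultimately show ?thesis
    using \<rho> c by (simp add: K_def measure_centered_box power2_eq_square algebra_simps)
qed

section \<open>Overlap of two close disks\<close>

text \<open>If two disks of radii at least \<open>\<rho>\<close> have centres within \<open>(1-c)\<close> times the sum
  of their radii, they contain disks of radius \<open>\<rho>\<close> whose centres are within
  \<open>2(1-c)\<rho>\<close>: both centres are pushed towards each other along the segment by
  the fractions \<open>(R\<^sub>1-\<rho>)/(R\<^sub>1+R\<^sub>2)\<close> and \<open>(R\<^sub>2-\<rho>)/(R\<^sub>1+R\<^sub>2)\<close>.\<close>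
lemma close_subdisks:
  fixes x y :: "'a::euclidean_space"
  assumes \<rho>: "\<rho> > 0" and R: "R1 \<ge> \<rho>" "R2 \<ge> \<rho>" and c: "0 \<le> c" "c < 1"
    and close: "dist x y \<le> (1-c)*(R1+R2)"
  obtains p q where "ball p \<rho> \<subseteq> ball x R1" "ball q \<rho> \<subseteq> ball y R2"
    "dist p q \<le> 2*(1-c)*\<rho>"
proof -
  define s where "s = 1/(R1+R2)"
  define p where "p = x + ((R1 - \<rho>) * s) *\<^sub>R (y - x)"
  define q where "q = y - ((R2 - \<rho>) * s) *\<^sub>R (y - x)"
  have s: "s > 0" "(R1 + R2) * s = 1"
    using \<rho> R by (auto simp: s_def)
  have dist_scaled: "a * s * dist x y \<le> (1-c) * a" if "a \<ge> 0" for a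
  proof -
    have "a * s * dist x y \<le> a * s * ((1-c)*(R1+R2))"
      using close that s by (intro mult_left_mono) auto
    also have "\<dots> = (1-c) * a * ((R1 + R2) * s)"
      by (simp add: algebra_simps)
    also have "\<dots> = (1-c) * a"
      using s(2) by simp
    finally show ?thesis .
  qed
  have shrink: "(1-c) * a \<le> a" if "a \<ge> 0" for a
    using c that by (simp add: mult_left_le_one_le)
  have "dist p x = (R1 - \<rho>) * s * dist x y"
    using R s by (simp add: p_def dist_norm norm_minus_commute)
  also have "\<dots> \<le> R1 - \<rho>"
    using dist_scaled[of "R1 - \<rho>"] shrink[of "R1 - \<rho>"] R by simp
  finally have ball_p: "ball p \<rho> \<subseteq> ball x R1"
    by (simp add: ball_subset_ball_iff)
  have "dist q y = (R2 - \<rho>) * s * dist x y"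
    using R s by (simp add: q_def dist_norm norm_minus_commute)
  also have "\<dots> \<le> R2 - \<rho>"
    using dist_scaled[of "R2 - \<rho>"] shrink[of "R2 - \<rho>"] R by simp
  finally have ball_q: "ball q \<rho> \<subseteq> ball y R2"
    by (simp add: ball_subset_ball_iff)
  have "dist p q \<le> 2*(1-c)*\<rho>"
  proof -
    have "q - p = (2 * \<rho> * s) *\<^sub>R (y - x)"
      using s(2) by (simp add: p_def q_def algebra_simps scaleR_add_left[symmetric])
    then have "dist p q = 2 * \<rho> * s * dist x y"
      using \<rho> s by (simp add: dist_norm norm_minus_commute[of p q] norm_minus_commute[of y x])
    then show ?thesis
      using dist_scaled[of "2 * \<rho>"] \<rho> by simp
  qed
  with ball_p ball_q show ?thesis
    using that by blast
qed

lemma partner_overlap_lower_bound: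
  fixes x y :: "real^2"
  assumes \<eta>: "\<eta> > 0" and c: "0 < c" "c \<le> 1/20" and R: "R1 \<ge> \<eta>" "R2 \<ge> \<eta>"
    and close: "dist x y \<le> (1-c)*(R1+R2)"
  shows "99/50 * c powr (3/2) * \<eta>^2 \<le> measure lebesgue (ball x R1 \<inter> ball y R2)"
proof -
  obtain p q where pq: "ball p \<eta> \<subseteq> ball x R1" "ball q \<eta> \<subseteq> ball y R2"
    "dist p q \<le> 2*(1-c)*\<eta>"
    using close_subdisks[OF \<eta> R _ _ close] c by auto
  have "99/50 * c powr (3/2) * \<eta>^2 \<le> measure lebesgue (ball p \<eta> \<inter> ball q \<eta>)"
    using lens_measure_lower_bound[OF \<eta> c pq(3)] .
  also have "\<dots> \<le> measure lebesgue (ball x R1 \<inter> ball y R2)"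
    using pq(1,2)
    by (intro measure_mono_fmeasurable) (auto intro: fmeasurable_Int_fmeasurable)
  finally show ?thesis .
qed

lemma measure_ball_cart2: "\<rho> \<ge> 0 \<Longrightarrow> measure lebesgue (ball (a::real^2) \<rho>) = \<rho>^2 * pi"
  using circle_area by (metis measure_completion sets_lborel borel_open open_ball)

lemma radius_ge_of_measure_ball:
  fixes a :: "real^2"
  assumes "\<eta> > 0" "pi * \<eta>^2 \<le> measure lebesgue (ball a \<rho>)"
  shows "\<rho> \<ge> \<eta>"
proof (rule ccontr)
  assume "\<not> \<rho> \<ge> \<eta>"
  then have "measure lebesgue (ball a \<rho>) < pi * \<eta>^2"
  proof (cases "\<rho> > 0")
    case True
    then have "\<rho>^2 < \<eta>^2"
      using \<open>\<not> \<rho> \<ge> \<eta>\<close> by (intro power_strict_mono) auto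
    moreover have "measure lebesgue (ball a \<rho>) = \<rho>^2 * pi"
      using True by (intro measure_ball_cart2) simp
    ultimately show ?thesis
      by (simp add: mult.commute)
  next
    case False
    then have empty: "ball a \<rho> = {}"
      by simp
    show ?thesis
      using assms(1) by (simp add: empty)
  qed
  then show False
    using assms(2) by linarith
qed

section \<open>Counting overlapping pairs in a disjoint family\<close>

lemma measure_sym_diff_equal_measure:
  assumes A: "A \<in> lmeasurable" and B: "B \<in> lmeasurable"
    and eq: "measure lebesgue A = measure lebesgue B"
  shows "measure lebesgue (sym_diff A B) = 2 * measure lebesgue (B - A)"
proof -
  have "A - B = A - (A \<inter> B)" "B - A = B - (A \<inter> B)"
    by auto
  then have AB: "measure lebesgue (A - B) = measure lebesgue A - measure lebesgue (A \<inter> B)"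
    and BA: "measure lebesgue (B - A) = measure lebesgue B - measure lebesgue (A \<inter> B)"
    using A B measure_Diff[of lebesgue A "A \<inter> B"] measure_Diff[of lebesgue B "A \<inter> B"]
    by (auto simp: fmeasurable_def)
  have "(A - B) \<inter> (B - A) = {}"
    by auto
  then have "measure lebesgue (sym_diff A B) = measure lebesgue (A - B) + measure lebesgue (B - A)"
    using A B measure_Un3[of "A - B" lebesgue "B - A"]
    by (simp add: sym_diff_def fmeasurable_Diff fmeasurableD)
  then show ?thesis
    using AB BA eq by simp
qed

lemma sum_measure_disjoint_traces:
  assumes "finite J" "E \<in> lmeasurable" "\<And>i. i \<in> J \<Longrightarrow> \<Omega> i \<in> sets lebesgue"
    and "disjoint_family_on \<Omega> J"
  shows "(\<Sum>i\<in>J. measure lebesgue (\<Omega> i \<inter> E)) \<le> measure lebesgue E"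
proof -
  have "(\<Sum>i\<in>J. measure lebesgue (\<Omega> i \<inter> E)) = measure lebesgue (\<Union>i\<in>J. \<Omega> i \<inter> E)"
    using assms
    by (intro measure_UNION'[symmetric])
       (auto simp: pairwise_def disjnt_def disjoint_family_on_def Int_commute[of _ E]
             intro: fmeasurable_Int_fmeasurable)
  also have "\<dots> \<le> measure lebesgue E"
    using assms by (intro measure_mono_fmeasurable) auto
  finally show ?thesis .
qed

text \<open>If every
  \<open>i \<in> J\<close> has a partner \<open>p i \<noteq> i\<close> with \<open>|B i \<inter> B (p i)| \<ge> L\<close>, then \<open>card J \<cdot> L\<close> is
  at most twice the total deficit \<open>\<Sum>\<^sub>k |B k - \<Omega> k|\<close>: the overlap lies in
  \<open>(B i - \<Omega> i) \<union> (\<Omega> i \<inter> (B (p i) - \<Omega> (p i)))\<close>, and the second pieces are disjoint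
  for different \<open>i\<close> with the same partner.\<close>
lemma partner_count_bound:
  fixes \<Omega> B :: "'i \<Rightarrow> 'a::euclidean_space set"
  assumes fin: "finite K" and JK: "J \<subseteq> K"
    and meas: "\<And>k. k \<in> K \<Longrightarrow> \<Omega> k \<in> lmeasurable \<and> B k \<in> lmeasurable"
    and disj: "disjoint_family_on \<Omega> K"
    and partner: "\<And>i. i \<in> J \<Longrightarrow> p i \<in> K \<and> p i \<noteq> i \<and> L \<le> measure lebesgue (B i \<inter> B (p i))"
  shows "real (card J) * L \<le> 2 * (\<Sum>k\<in>K. measure lebesgue (B k - \<Omega> k))"
proof -
  let ?D = "\<lambda>k. measure lebesgue (B k - \<Omega> k)"
  let ?T = "\<lambda>i k. measure lebesgue (\<Omega> i \<inter> (B k - \<Omega> k))"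
  have meas_D: "B k - \<Omega> k \<in> lmeasurable" if "k \<in> K" for k
    using meas[OF that] by (auto intro: fmeasurable_Diff)
  have overlap: "L \<le> ?D i + ?T i (p i)" if i: "i \<in> J" for i
  proof -
    have "\<Omega> i \<inter> \<Omega> (p i) = {}"
      using disj partner[OF i] i JK by (auto simp: disjoint_family_on_def)
    then have "B i \<inter> B (p i) \<subseteq> (B i - \<Omega> i) \<union> (\<Omega> i \<inter> (B (p i) - \<Omega> (p i)))"
      by auto
    moreover have "\<Omega> i \<inter> (B (p i) - \<Omega> (p i)) \<in> lmeasurable"
      using meas partner[OF i] meas_D i JK by (auto intro: fmeasurable_Int_fmeasurable)
    moreover have "B i \<inter> B (p i) \<in> sets lebesgue"
      using meas i JK partner[OF i] by (meson fmeasurableD sets.Int subsetD)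
    ultimately have "measure lebesgue (B i \<inter> B (p i)) \<le> ?D i + ?T i (p i)"
      using meas_D i JK
      by (intro order_trans[OF measure_mono_fmeasurable measure_Un_le]) auto
    then show ?thesis
      using partner[OF i] by linarith
  qed
  have "real (card J) * L \<le> (\<Sum>i\<in>J. ?D i) + (\<Sum>i\<in>J. ?T i (p i))"
    using sum_mono[OF overlap] by (simp add: sum.distrib)
  also have "(\<Sum>i\<in>J. ?D i) \<le> (\<Sum>k\<in>K. ?D k)"
    using fin JK by (intro sum_mono2) auto
  also have "(\<Sum>i\<in>J. ?T i (p i)) \<le> (\<Sum>i\<in>J. \<Sum>k\<in>K. ?T i k)"
    using fin partner by (intro sum_mono member_le_sum) auto
  also have "\<dots> = (\<Sum>k\<in>K. \<Sum>i\<in>J. ?T i k)"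
    by (rule sum.swap)
  also have "\<dots> \<le> (\<Sum>k\<in>K. ?D k)"
    using fin JK meas meas_D disj
    by (intro sum_mono sum_measure_disjoint_traces)
       (auto intro: finite_subset disjoint_family_on_mono)
  finally show ?thesis
    by simp
qed

lemma close_disks_count_bound:
  fixes \<Omega> :: "'i \<Rightarrow> (real^2) set" and x :: "'i \<Rightarrow> real^2" and r :: "'i \<Rightarrow> real"
  assumes fin: "finite K" and JK: "J \<subseteq> K" and \<eta>: "\<eta> > 0" and c: "0 < c" "c \<le> 1/20"
    and cells: "\<And>k. k \<in> K \<Longrightarrow> \<Omega> k \<in> lmeasurable \<and> \<eta> \<le> r k"
    and disj: "disjoint_family_on \<Omega> K"
    and close: "\<And>i. i \<in> J \<Longrightarrow> \<exists>j\<in>K. j \<noteq> i \<and> dist (x i) (x j) \<le> (1-c) * (r i + r j)"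
  shows "real (card J) * (99/50 * c powr (3/2) * \<eta>^2)
           \<le> 2 * (\<Sum>k\<in>K. measure lebesgue (ball (x k) (r k) - \<Omega> k))"
proof -
  obtain p where p: "\<forall>i\<in>J. p i \<in> K \<and> p i \<noteq> i \<and> dist (x i) (x (p i)) \<le> (1-c) * (r i + r (p i))"
    using bchoice[of J "\<lambda>i j. j \<in> K \<and> j \<noteq> i \<and> dist (x i) (x j) \<le> (1-c) * (r i + r j)"] close
    by blast
  show ?thesis
  proof (rule partner_count_bound[OF fin JK _ disj])
    fix i assume "i \<in> J"
    then have j: "p i \<in> K" "p i \<noteq> i" "dist (x i) (x (p i)) \<le> (1-c) * (r i + r (p i))"
      and i: "i \<in> K"
      using p JK by auto
    have "99/50 * c powr (3/2) * \<eta>^2 \<le> measure lebesgue (ball (x i) (r i) \<inter> ball (x (p i)) (r (p i)))"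
      using \<eta> c cells[OF i] cells[OF j(1)] j(3) by (intro partner_overlap_lower_bound) auto
    with j show "p i \<in> K \<and> p i \<noteq> i \<and>
        99/50 * c powr (3/2) * \<eta>^2 \<le> measure lebesgue (ball (x i) (r i) \<inter> ball (x (p i)) (r (p i)))"
      by blast
  qed (use cells in auto)
qed

text \<open>The final arithmetic: \<open>(20\<pi>/37)(99/50) = 1980\<pi>/1850 \<ge> \<pi>\<close>.\<close>
lemma constant_bookkeeping:
  fixes n c c1 \<eta> d M :: real
  assumes "n \<ge> 0" "c > 0" "c1 > 0"
    and count: "n * (99/50 * c powr (3/2) * \<eta>^2) \<le> d"
    and M: "M \<le> n * ((1 + c1) * pi * \<eta>^2)"
  shows "M \<le> 20 * pi / 37 * ((1 + c1) / c powr (3/2)) * d"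
proof -
  define A where "A = 20 * pi / 37 * ((1 + c1) / c powr (3/2))"
  have A: "A \<ge> 0"
    using assms by (simp add: A_def)
  have "n * ((1 + c1) * pi * \<eta>^2) \<le> 1980/1850 * (n * ((1 + c1) * pi * \<eta>^2))"
    using assms by simp
  also have "\<dots> = A * (n * (99/50 * c powr (3/2) * \<eta>^2))"
    using assms(2) by (simp add: A_def field_simps)
  also have "\<dots> \<le> A * d"
    using count A by (rule mult_left_mono)
  finally show ?thesis
    using M by (simp add: A_def)
qed

theorem mainTheorem5:
  fixes \<Omega> :: "(real^2) set" and \<Omega>s :: "nat \<Rightarrow> (real^2) set" and N :: nat
    and \<eta>0 c1 c2 d1 :: real and x :: "nat \<Rightarrow> real^2" and r :: "nat \<Rightarrow> real"
    and I J :: "nat set"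
  assumes "open \<Omega>" and "bounded \<Omega>" and "measure lebesgue \<Omega> = 1"
    and "N \<ge> 1"
    and "\<Omega> = (\<Union>i\<in>{1..N}. \<Omega>s i)"
    and "\<And>i j. i \<in> {1..N} \<Longrightarrow> j \<in> {1..N} \<Longrightarrow> i \<noteq> j \<Longrightarrow> \<Omega>s i \<inter> \<Omega>s j = {}"
    and "\<And>i. i \<in> {1..N} \<Longrightarrow> \<Omega>s i \<in> sets lebesgue"
    and "\<And>i. i \<in> {1..N} \<Longrightarrow> measure lebesgue (\<Omega>s i) > 0"
    and "\<eta>0 > 0"
    and "pi * \<eta>0^2 = Min ((\<lambda>i. measure lebesgue (\<Omega>s i)) ` {1..N})"
    and "\<And>i. i \<in> {1..N} \<Longrightarrow> measure lebesgue (ball (x i) (r i)) = measure lebesgue (\<Omega>s i)"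
    and "\<And>i. i \<in> {1..N} \<Longrightarrow> measure lebesgue (sym_diff (\<Omega>s i) (ball (x i) (r i)))
             = measure lebesgue (\<Omega>s i) * fraenkel_asymmetry (\<Omega>s i)"
    and "c1 > 0" and "c2 > 0" and "c2 \<le> 1/20" and "d1 \<ge> 0"
    and "(\<Sum>i=1..N. measure lebesgue (\<Omega>s i) / measure lebesgue \<Omega> * fraenkel_asymmetry (\<Omega>s i)) \<le> d1"
    and "I = {i \<in> {1..N}. measure lebesgue (\<Omega>s i) \<ge> (1 + c1) * pi * \<eta>0^2}"
    and "J = {i \<in> {1..N} - I. \<exists>j \<in> {1..N} - I. j \<noteq> i \<and>
               dist (x i) (x j) \<le> (1 - c2) * (r i + r j)}"
  shows "measure lebesgue (\<Union>i\<in>J. ball (x i) (r i))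
           \<le> 20 * pi / 37 * ((1 + c1) / c2 powr (3/2)) * d1"
proof -
  let ?\<mu> = "measure lebesgue"
  define B where "B k = ball (x k) (r k)" for k
  have JN: "J \<subseteq> {1..N}"
    using assms(19) by auto
  have cell: "\<Omega>s k \<in> lmeasurable" if "k \<in> {1..N}" for k
  proof (rule bounded_set_imp_lmeasurable)
    show "bounded (\<Omega>s k)"
      using assms(5) that by (intro bounded_subset[OF assms(2)]) auto
  qed (rule assms(7)[OF that])
  have disj: "disjoint_family_on \<Omega>s {1..N}"
    using assms(6) by (auto simp: disjoint_family_on_def)
  \<comment> \<open>every disk has area at least the minimal cell area \<open>\<pi>\<eta>0^2\<close>\<close>
  have radius: "\<eta>0 \<le> r k" if "k \<in> {1..N}" for k
    using assms(9) assms(10) assms(11)[OF that] that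
    by (intro radius_ge_of_measure_ball[of \<eta>0 "x k"]) auto
  have close: "\<exists>j\<in>{1..N}. j \<noteq> i \<and> dist (x i) (x j) \<le> (1 - c2) * (r i + r j)" if "i \<in> J" for i
    using that assms(19) by blast
  have "real (card J) * (99/50 * c2 powr (3/2) * \<eta>0^2) \<le> 2 * (\<Sum>k=1..N. ?\<mu> (B k - \<Omega>s k))"
    unfolding B_def using JN assms(9,14,15) cell radius disj close
    by (intro close_disks_count_bound) auto
  \<comment> \<open>twice the deficit of a cell is its symmetric difference with the optimal disk\<close>
  also have "\<dots> = (\<Sum>k=1..N. ?\<mu> (\<Omega>s k) / ?\<mu> \<Omega> * fraenkel_asymmetry (\<Omega>s k))"
    unfolding sum_distrib_left using assms(3,11,12) cell
    by (intro sum.cong) (auto simp: B_def measure_sym_diff_equal_measure[symmetric])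
  also have "\<dots> \<le> d1"
    by (rule assms(17))
  finally have count: "real (card J) * (99/50 * c2 powr (3/2) * \<eta>0^2) \<le> d1" .
  \<comment> \<open>cells outside \<open>I\<close> are small\<close>
  have "?\<mu> (\<Union>i\<in>J. B i) \<le> (\<Sum>i\<in>J. ?\<mu> (B i))"
    using JN by (intro measure_UNION_le) (auto simp: B_def intro: finite_subset)
  also have "\<dots> \<le> (\<Sum>i\<in>J. (1 + c1) * pi * \<eta>0^2)"
    using assms(11,18,19) by (intro sum_mono) (auto simp: B_def)
  finally have "?\<mu> (\<Union>i\<in>J. B i) \<le> real (card J) * ((1 + c1) * pi * \<eta>0^2)"
    by simp
  with count show ?thesis
    unfolding B_def using assms(13,14) by (intro constant_bookkeeping) auto
qed

end
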